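(* Let $\mathcal{A}$ be a unital semiprime algebra over a field $F$ with $\operatorname{char}(F)\neq 2$. Then $\operatorname{GJDer}(\mathcal{A})=\operatorname{Cent}(\mathcal{A})+\operatorname{Der}(\mathcal{A})$.
   Context: $\mathcal{A}$ is semiprime if $a\mathcal{A}a=\{0\}$ implies $a=0$. For $x,y\in\mathcal{A}$ let $x\circ y=xy+yx$. $\operatorname{GJDer}(\mathcal{A})$ is the set of linear maps $f:\mathcal{A}\to\mathcal{A}$ for which there exist linear maps $g,h:\mathcal{A}\to\mathcal{A}$ with $f(x)\circ y+x\circ g(y)=h(x\circ y)$ for all $x,y\in\mathcal{A}$. $\operatorname{Cent}(\mathcal{A})$ is the set of linear maps $f$ with $f(xy)=f(x)y=xf(y)$ for all $x,y$ (centralizers). $\operatorname{Der}(\mathcal{A})$ is the set of derivations, i.e. linear $d$ with $d(xy)=d(x)y+xd(y)$. The sum of two sets of maps is the set of pointwise sums. *)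

theory Defs
  imports Main
begin

text \<open>An associative algebra over a field 'k: the carrier is a type of class ring
  (associative, not necessarily unital at the class level), with a scalar action sc.\<close>

definition is_algebra :: "('k::field \<Rightarrow> 'a::ring \<Rightarrow> 'a) \<Rightarrow> bool" where
  "is_algebra sc \<longleftrightarrow>
     (\<forall>c x y. sc c (x + y) = sc c x + sc c y) \<and>
     (\<forall>c d x. sc (c + d) x = sc c x + sc d x) \<and>
     (\<forall>c d x. sc (c * d) x = sc c (sc d x)) \<and>
     (\<forall>x. sc 1 x = x) \<and>
     (\<forall>c x y. sc c (x * y) = sc c x * y) \<and>
     (\<forall>c x y. sc c (x * y) = x * sc c y)"

definition unital :: "'a::ring itself \<Rightarrow> bool" where
  "unital _ \<longleftrightarrow> (\<exists>e::'a. \<forall>x. e * x = x \<and> x * e = x)"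

definition semiprime :: "'a::ring itself \<Rightarrow> bool" where
  "semiprime _ \<longleftrightarrow> (\<forall>a::'a. (\<forall>x. a * x * a = 0) \<longrightarrow> a = 0)"

definition is_linear :: "('k::field \<Rightarrow> 'a::ring \<Rightarrow> 'a) \<Rightarrow> ('a \<Rightarrow> 'a) \<Rightarrow> bool" where
  "is_linear sc f \<longleftrightarrow> (\<forall>x y. f (x + y) = f x + f y) \<and> (\<forall>c x. f (sc c x) = sc c (f x))"

definition jcirc :: "'a::ring \<Rightarrow> 'a \<Rightarrow> 'a" where
  "jcirc x y = x * y + y * x"

definition GJDer :: "('k::field \<Rightarrow> 'a::ring \<Rightarrow> 'a) \<Rightarrow> ('a \<Rightarrow> 'a) set" where
  "GJDer sc = {f. is_linear sc f \<and>
      (\<exists>g h. is_linear sc g \<and> is_linear sc h \<and>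
         (\<forall>x y. jcirc (f x) y + jcirc x (g y) = h (jcirc x y)))}"

definition Cent :: "('k::field \<Rightarrow> 'a::ring \<Rightarrow> 'a) \<Rightarrow> ('a \<Rightarrow> 'a) set" where
  "Cent sc = {f. is_linear sc f \<and> (\<forall>x y. f (x * y) = f x * y \<and> f (x * y) = x * f y)}"

definition Der :: "('k::field \<Rightarrow> 'a::ring \<Rightarrow> 'a) \<Rightarrow> ('a \<Rightarrow> 'a) set" where
  "Der sc = {d. is_linear sc d \<and> (\<forall>x y. d (x * y) = d x * y + x * d y)}"

definition map_setsum :: "('a \<Rightarrow> 'b::plus) set \<Rightarrow> ('a \<Rightarrow> 'b) set \<Rightarrow> ('a \<Rightarrow> 'b) set" where
  "map_setsum S T = {(\<lambda>x. f x + g x) | f g. f \<in> S \<and> g \<in> T}"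

end

theory Submission
  imports Defs
begin

text \<open>Putting the unit e into either argument of f(x) \<circ> y + x \<circ> g(y) = h(x \<circ> y) expresses 2g and 2h
  through f, a = f(e) and b = g(e); the symmetry of \<circ> then shows that a - b commutes with all
  commutators, hence is central, and F = 2f satisfies F(x \<circ> y) = F(x) \<circ> y + x \<circ> F(y) - (x \<circ> y) \<circ> a.
  Applying F to the linearized Jordan identity, the F-terms cancel and leave identities in the
  inner derivation ad a, from which semiprimeness forces (ad a)^3 = 0, then (ad a)^2 = 0, and
  finally that a is central. Then x \<mapsto> f(x) - a x is a Jordan derivation, hence a derivation by
  Herstein's theorem, and f is the sum of the centralizer x \<mapsto> a x and this derivation.\<close>

section \<open>Semiprime rings\<close>

definition two_torsion_free :: "'a::ring itself \<Rightarrow> bool" where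
  "two_torsion_free _ \<longleftrightarrow> (\<forall>x::'a. x + x = 0 \<longrightarrow> x = 0)"

definition ad :: "'a::ring \<Rightarrow> 'a \<Rightarrow> 'a" where
  "ad a x = a * x - x * a"

lemma semiprimeD: "semiprime TYPE('a::ring) \<Longrightarrow> (\<And>x. a * x * a = 0) \<Longrightarrow> a = (0::'a)"
  unfolding semiprime_def by blast

lemma two_torsion_freeD: "two_torsion_free TYPE('a::ring) \<Longrightarrow> x + x = 0 \<Longrightarrow> x = (0::'a)"
  unfolding two_torsion_free_def by blast

lemma two_torsion_free_double_cancel:
  assumes "two_torsion_free TYPE('a::ring)" and "x + x = y + (y::'a)"
  shows "x = y"
proof -
  have "(x - y) + (x - y) = 0"
    using assms(2) by (simp add: algebra_simps)
  then have "x - y = 0"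
    by (rule two_torsion_freeD[OF assms(1)])
  then show ?thesis
    by simp
qed

lemma ad_add: "ad a (x + y) = ad a x + ad a y"
  by (simp add: ad_def algebra_simps)

lemma ad_add_left: "ad (x + y) z = ad x z + ad y z"
  by (simp add: ad_def algebra_simps)

lemma ad_mult: "ad a (x * y) = ad a x * y + x * ad a y"
  by (simp add: ad_def algebra_simps)

lemma sandwich_eq_0_if_symmetric_sandwich_eq_0:
  fixes u v :: "'a::ring"
  assumes "semiprime TYPE('a)" and "two_torsion_free TYPE('a)"
    and sym: "\<And>z. u * z * v + v * z * u = 0"
  shows "u * x * v = 0"
proof -
  define s where "s = u * x * v"
  have "s * y * s = 0" for y
  proof (rule two_torsion_freeD[OF assms(2)])
    have "s * y * s + s * y * s = (u*x*v + v*x*u) * y * s - v * x * (u*(y*u*x)*v + v*(y*u*x)*u)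
        + v * x * (u*y*v + v*y*u) * x * u - (u*x*v + v*x*u) * y * (v*x*u) + s * y * (u*x*v + v*x*u)"
      by (simp add: s_def algebra_simps)
    then show "s * y * s + s * y * s = 0" using sym by simp
  qed
  then show ?thesis using semiprimeD[OF assms(1)] s_def by blast
qed

lemma sandwich_eq_0_swap:
  fixes u v :: "'a::ring"
  assumes "semiprime TYPE('a)" and "\<And>z. u * z * v = 0"
  shows "v * x * u = 0"
proof (rule semiprimeD[OF assms(1)])
  fix y
  have "v * x * u * y * (v * x * u) = v * x * (u * y * v) * x * u"
    by (simp add: mult.assoc)
  then show "v * x * u * y * (v * x * u) = 0"
    by (simp add: assms(2))
qed

lemma sandwich_eq_0_polarize:
  fixes A B :: "'b::plus \<Rightarrow> 'a::ring"
  assumes "semiprime TYPE('a)"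
    and A_add: "\<And>p q. A (p + q) = A p + A q" and B_add: "\<And>p q. B (p + q) = B p + B q"
    and diag: "\<And>p x. A p * x * B p = 0"
  shows "A p * x * B q = 0"
proof (rule semiprimeD[OF assms(1)])
  fix y
  have cross: "A p * z * B q = - (A q * z * B p)" for z
    using diag[of "p + q" z] diag[of p z] diag[of q z]
    by (simp add: A_add B_add algebra_simps eq_neg_iff_add_eq_0)
  define s where "s = A p * x * B q"
  have "s * y * s = s * y * (- (A q * x * B p))"
    by (simp only: cross[of x, folded s_def, symmetric])
  also have "\<dots> = - (A p * (x * B q * y * A q * x) * B p)"
    by (simp add: s_def mult.assoc)
  finally show "s * y * s = 0"
    by (simp add: diag)
qed

lemma central_if_commutes_with_commutators:
  fixes k :: "'a::ring"
  assumes "semiprime TYPE('a)"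
    and comm: "\<And>x y. k * ad x y = ad x y * k"
  shows "k * x = x * k"
proof -
  have "ad x y * ad k x = 0" for y
  proof -
    have "ad x y * ad k x = k * ad x (y * x) - ad x (y * x) * k - (k * ad x y - ad x y * k) * x"
      by (simp add: ad_def algebra_simps)
    then show ?thesis by (simp add: comm)
  qed
  moreover have "ad x y * z * ad k x = ad x (y * z) * ad k x - y * (ad x z * ad k x)" for y z
    by (simp add: ad_def algebra_simps)
  ultimately have "ad x y * z * ad k x = 0" for y z
    by simp
  from this[of k] have "ad k x * z * ad k x = 0" for z
    by (simp add: ad_def algebra_simps)
  then have "ad k x = 0" by (rule semiprimeD[OF assms(1)])
  then show ?thesis by (simp add: ad_def)
qed

section \<open>Herstein's theorem on Jordan derivations\<close>

locale jordan_derivation =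
  fixes D :: "'a::ring \<Rightarrow> 'a"
  assumes additive: "D (x + y) = D x + D y"
    and jcirc: "D (jcirc x y) = jcirc (D x) y + jcirc x (D y)"
begin

lemma zero [simp]: "D 0 = 0"
  using additive[of 0 0] by simp

lemma minus: "D (- x) = - D x"
  using additive[of x "- x"] by (simp add: add_eq_0_iff)

lemma diff: "D (x - y) = D x - D y"
  using additive[of x "- y"] by (simp add: minus)

definition leibniz_defect :: "'a \<Rightarrow> 'a \<Rightarrow> 'a" where
  "leibniz_defect x y = D (x * y) - D x * y - x * D y"

lemma leibniz_defect_swap: "leibniz_defect y x = - leibniz_defect x y"
  using jcirc[of x y] by (simp add: leibniz_defect_def jcirc_def additive algebra_simps)

lemma leibniz_defect_add_left: "leibniz_defect (x + z) y = leibniz_defect x y + leibniz_defect z y"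
  by (simp add: leibniz_defect_def additive algebra_simps)

lemma leibniz_defect_add_right: "leibniz_defect x (y + z) = leibniz_defect x y + leibniz_defect x z"
  by (simp add: leibniz_defect_def additive algebra_simps)

end

locale semiprime_jordan_derivation = jordan_derivation D for D :: "'a::ring \<Rightarrow> 'a" +
  assumes semiprime: "semiprime TYPE('a)"
    and two_torsion_free: "two_torsion_free TYPE('a)"
begin

lemma square: "D (x * x) = D x * x + x * D x"
proof -
  have "leibniz_defect x x + leibniz_defect x x = 0"
    using leibniz_defect_swap[of x x] by (metis add.right_inverse)
  then have "leibniz_defect x x = 0"
    by (rule two_torsion_freeD[OF two_torsion_free])
  then show ?thesis
    by (simp add: leibniz_defect_def algebra_simps)
qed

lemma triple: "D (x * y * x) = D x * y * x + x * D y * x + x * y * D x"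
proof -
  have "D (x * y * x) + D (x * y * x) = D (x * y * x + x * y * x)"
    by (simp only: additive)
  also have "\<dots> = D (jcirc x (jcirc x y) - jcirc (x * x) y)"
    by (simp add: jcirc_def algebra_simps)
  also have "\<dots> = D (jcirc x (jcirc x y)) - D (jcirc (x * x) y)"
    by (rule diff)
  also have "\<dots> = (D x * y * x + x * D y * x + x * y * D x) + (D x * y * x + x * D y * x + x * y * D x)"
    by (simp only: jcirc square) (simp add: jcirc_def algebra_simps)
  finally show ?thesis
    by (rule two_torsion_free_double_cancel[OF two_torsion_free])
qed

lemma triple_sym:
  "D (x * y * z + z * y * x) = D x * y * z + x * D y * z + x * y * D z + D z * y * x + z * D y * x + z * y * D x"
proof -
  have expand: "x * y * z + z * y * x = (x + z) * y * (x + z) - x * y * x - z * y * z"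
    by (simp add: algebra_simps)
  show ?thesis
    unfolding expand by (simp only: diff triple additive) (simp add: algebra_simps)
qed

lemma leibniz_defect_sandwich_commutator:
  "leibniz_defect p q * x * ad q p + ad q p * x * leibniz_defect p q = 0"
proof -
  \<comment> \<open>expand D((pq)x(qp) + (qp)x(pq)) by triple_sym, and again after regrouping it as p(qxq)p + q(pxp)q\<close>
  define u where "u = leibniz_defect p q"
  have Dpq: "D (p * q) = u + D p * q + p * D q"
    by (simp add: u_def leibniz_defect_def)
  have Dqp: "D (q * p) = - u + D q * p + q * D p"
    using leibniz_defect_swap[of p q] by (simp add: u_def leibniz_defect_def algebra_simps)
  have expand: "(p * q) * x * (q * p) + (q * p) * x * (p * q) = p * (q * x * q) * p + q * (p * x * p) * q"
    by (simp add: algebra_simps)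
  have "D (p * (q * x * q) * p + q * (p * x * p) * q) =
       D (p * q) * x * (q * p) + (p * q) * D x * (q * p) + (p * q) * x * D (q * p)
     + D (q * p) * x * (p * q) + (q * p) * D x * (p * q) + (q * p) * x * D (p * q)"
    unfolding expand[symmetric] by (rule triple_sym)
  then show ?thesis
    unfolding Dpq Dqp additive triple by (simp add: u_def[symmetric] ad_def algebra_simps)
qed

lemma leibniz_defect_sandwich_any_commutator: "leibniz_defect p q * x * ad d c = 0"
proof -
  have diag: "leibniz_defect p q * x * ad q p = 0" for p q x
    using sandwich_eq_0_if_symmetric_sandwich_eq_0[OF semiprime two_torsion_free]
      leibniz_defect_sandwich_commutator by blast
  have left: "leibniz_defect p q * x * ad q c = 0" for p q c x
    by (rule sandwich_eq_0_polarize[OF semiprime, where A = "\<lambda>p. leibniz_defect p q" and B = "ad q"])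
      (simp_all add: leibniz_defect_add_left ad_add diag)
  show ?thesis
    by (rule sandwich_eq_0_polarize[OF semiprime, where A = "leibniz_defect p" and B = "\<lambda>q. ad q c"])
      (simp_all add: leibniz_defect_add_right ad_add_left left)
qed

lemma leibniz_defect_central: "leibniz_defect p q * z = z * leibniz_defect p q"
proof -
  define u where "u = leibniz_defect p q"
  have commutator_sandwich: "ad d c * y * u = 0" for c d y
    using sandwich_eq_0_swap[OF semiprime] leibniz_defect_sandwich_any_commutator by (simp add: u_def)
  have "ad u z * y * ad u z = ad u z * y * u * z - ad u z * (y * z) * u" for y
    by (simp add: ad_def algebra_simps)
  then have "ad u z * y * ad u z = 0" for y
    by (simp add: commutator_sandwich)
  then have "ad u z = 0"
    by (rule semiprimeD[OF semiprime])
  then show ?thesis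
    by (simp add: u_def ad_def)
qed

lemma leibniz_defect_mult_commutator: "leibniz_defect p q * ad d c = 0"
proof (rule semiprimeD[OF semiprime])
  fix z
  have "leibniz_defect p q * ad d c * z * (leibniz_defect p q * ad d c)
      = leibniz_defect p q * (ad d c * z * leibniz_defect p q) * ad d c"
    by (simp add: mult.assoc)
  then show "leibniz_defect p q * ad d c * z * (leibniz_defect p q * ad d c) = 0"
    by (simp add: leibniz_defect_sandwich_any_commutator)
qed

lemma leibniz_defect_square_mult_D_commutator:
  "leibniz_defect p q * leibniz_defect p q * D (ad d c) = 0"
proof -
  define u where "u = leibniz_defect p q"
  define w where "w = ad d c"
  have uw: "u * w = 0" and wu: "w * u = 0"
    using leibniz_defect_mult_commutator leibniz_defect_central by (metis u_def w_def)+
  have "D u * w + w * D u + u * D w + D w * u = D (jcirc u w)"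
    by (simp only: jcirc) (simp add: jcirc_def algebra_simps)
  also have "\<dots> = 0"
    by (simp add: jcirc_def uw wu)
  finally have "u * (D u * w + w * D u + u * D w + D w * u) = 0"
    by simp
  moreover have "u * D u * w = 0"
    using leibniz_defect_sandwich_any_commutator by (simp add: u_def w_def)
  moreover have "u * D w * u = u * u * D w"
    using leibniz_defect_central by (metis u_def mult.assoc)
  ultimately have "u * u * D w + u * u * D w = 0"
    by (simp add: distrib_left mult.assoc[symmetric] uw)
  then show ?thesis
    unfolding u_def w_def by (rule two_torsion_freeD[OF two_torsion_free])
qed

theorem derivation: "D (x * y) = D x * y + x * D y"
proof -
  \<comment> \<open>u is central and kills commutators, so 2u^3 = u^2 (D[x,y] - [Dx,y] - [x,Dy]) = 0\<close>
  define u where "u = leibniz_defect x y"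
  have central: "u * z = z * u" for z
    by (simp add: u_def leibniz_defect_central)
  have "u + u = D (ad x y) - ad (D x) y - ad x (D y)"
    using leibniz_defect_swap[of x y] by (simp add: u_def leibniz_defect_def ad_def diff algebra_simps)
  then have "u * u * u + u * u * u = u * u * D (ad x y) - u * (u * ad (D x) y) - u * (u * ad x (D y))"
    by (simp add: distrib_left[symmetric] right_diff_distrib mult.assoc)
  then have "u * u * u + u * u * u = 0"
    by (simp add: u_def leibniz_defect_square_mult_D_commutator leibniz_defect_mult_commutator)
  then have cube: "u * u * u = 0"
    by (rule two_torsion_freeD[OF two_torsion_free])
  have "u * u = 0"
  proof (rule semiprimeD[OF semiprime])
    show "u * u * z * (u * u) = 0" for z
      using central cube by (metis mult.assoc mult_zero_right)
  qed
  then have "u = 0"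
    using central semiprimeD[OF semiprime] by (metis mult.assoc mult_zero_right)
  then show ?thesis
    by (simp add: u_def leibniz_defect_def algebra_simps)
qed

end

section \<open>Twisted Jordan derivations\<close>

lemma jcirc_linearized_jordan_identity:
  fixes p q r y :: "'a::ring"
  shows "jcirc (jcirc (jcirc p q) y) r + jcirc (jcirc (jcirc q r) y) p + jcirc (jcirc (jcirc r p) y) q
       = jcirc (jcirc p q) (jcirc y r) + jcirc (jcirc q r) (jcirc y p) + jcirc (jcirc r p) (jcirc y q)"
  unfolding jcirc_def by (simp add: algebra_simps)

text \<open>What remains of the linearized Jordan identity at (p, q, y, r) = (a, a, y, x), resp.
  (a, x, a, x), after applying a twisted Jordan derivation: the contributions of F cancel.\<close>

definition jordan_obstruction_aayx :: "'a::ring \<Rightarrow> 'a \<Rightarrow> 'a \<Rightarrow> 'a" where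
  "jordan_obstruction_aayx a x y =
     ad (ad a x) (ad a (ad a y)) + ad (ad a (ad a x)) (ad a y) + ad (ad a (ad a (ad a x))) y"

definition jordan_obstruction_axax :: "'a::ring \<Rightarrow> 'a \<Rightarrow> 'a" where
  "jordan_obstruction_axax a x = ad x (ad a (ad a (ad a x))) + ad (ad a x) (ad a (ad a x))"

locale twisted_jordan_derivation =
  fixes F :: "'a::ring \<Rightarrow> 'a" and a :: 'a
  assumes additive: "F (x + y) = F x + F y"
    and jcirc: "F (jcirc x y) = jcirc (F x) y + jcirc x (F y) - jcirc (jcirc x y) a"
begin

lemma jordan_identity:
  "F (jcirc (jcirc (jcirc p q) y) r) + F (jcirc (jcirc (jcirc q r) y) p) + F (jcirc (jcirc (jcirc r p) y) q)
 = F (jcirc (jcirc p q) (jcirc y r)) + F (jcirc (jcirc q r) (jcirc y p)) + F (jcirc (jcirc r p) (jcirc y q))"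
  by (metis additive jcirc_linearized_jordan_identity)

lemma double_jordan_obstruction_aayx_eq_0:
  "jordan_obstruction_aayx a x y + jordan_obstruction_aayx a x y = 0"
proof -
  have "jordan_obstruction_aayx a x y + jordan_obstruction_aayx a x y
      = (F (jcirc (jcirc (jcirc a a) y) x) + F (jcirc (jcirc (jcirc a x) y) a) + F (jcirc (jcirc (jcirc x a) y) a))
      - (F (jcirc (jcirc a a) (jcirc y x)) + F (jcirc (jcirc a x) (jcirc y a)) + F (jcirc (jcirc x a) (jcirc y a)))"
    unfolding jcirc by (simp add: jordan_obstruction_aayx_def jcirc_def ad_def algebra_simps)
  then show ?thesis
    by (simp add: jordan_identity)
qed

lemma quadruple_jordan_obstruction_axax_eq_0:
  "(jordan_obstruction_axax a x + jordan_obstruction_axax a x)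
 + (jordan_obstruction_axax a x + jordan_obstruction_axax a x) = 0"
proof -
  have "(jordan_obstruction_axax a x + jordan_obstruction_axax a x)
      + (jordan_obstruction_axax a x + jordan_obstruction_axax a x)
      = (F (jcirc (jcirc a x) (jcirc a x)) + F (jcirc (jcirc x x) (jcirc a a)) + F (jcirc (jcirc x a) (jcirc a x)))
      - (F (jcirc (jcirc (jcirc a x) a) x) + F (jcirc (jcirc (jcirc x x) a) a) + F (jcirc (jcirc (jcirc x a) a) x))"
    unfolding jcirc by (simp add: jordan_obstruction_axax_def jcirc_def ad_def algebra_simps)
  then show ?thesis
    by (simp add: jordan_identity)
qed

end

lemma ad_eq_0_if_ad_ad_eq_0:
  fixes a :: "'a::ring"
  assumes "semiprime TYPE('a)" and "two_torsion_free TYPE('a)"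
    and ad2: "\<And>x. ad a (ad a x) = 0"
  shows "ad a x = 0"
proof (rule semiprimeD[OF assms(1)])
  have "ad a y * ad a z + ad a y * ad a z = ad a (ad a (y * z)) - ad a (ad a y) * z - y * ad a (ad a z)" for y z
    by (simp add: ad_mult ad_add algebra_simps)
  then have "ad a y * ad a z + ad a y * ad a z = 0" for y z
    by (simp add: ad2)
  then have products: "ad a y * ad a z = 0" for y z
    by (rule two_torsion_freeD[OF assms(2)])
  fix z
  have "ad a x * z * ad a x = ad a x * ad a (z * x) - ad a x * ad a z * x"
    by (simp add: ad_mult ad_add algebra_simps)
  then show "ad a x * z * ad a x = 0"
    by (simp add: products)
qed

lemma ad_ad_ad_eq_0_if_jordan_obstruction_aayx:
  fixes a :: "'a::ring"
  assumes "semiprime TYPE('a)"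
    and obstruction: "\<And>x y. jordan_obstruction_aayx a x y = 0"
  shows "ad a (ad a (ad a x)) = 0"
proof (rule semiprimeD[OF assms(1)])
  define r where "r = ad a (ad a (ad a x))"
  have "ad a (ad a (ad a (ad a x))) = - jordan_obstruction_aayx a x a"
    by (simp add: jordan_obstruction_aayx_def ad_def algebra_simps)
  then have fourth: "ad a (ad a (ad a (ad a x))) = 0"
    by (simp add: obstruction)
  have "ad a (ad a u) * ad a (ad a w) + ad a (ad a (ad a u)) * ad a w
      = a * jordan_obstruction_aayx a u w + jordan_obstruction_aayx a u a * w - jordan_obstruction_aayx a u (a * w)" for u w
    by (simp add: jordan_obstruction_aayx_def ad_def algebra_simps)
  from this[of "ad a x"] have r_ad2: "r * ad a (ad a w) = 0" for w
    by (simp add: obstruction fourth r_def)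
  then have r_ad2_mult: "r * (ad a (ad a w) * z) = 0" for w z
    by (metis mult.assoc mult_zero_left)
  have "r * (ad a y * ad a z) + r * (ad a y * ad a z) + r * (y * ad a (ad a z))
      = r * ad a (ad a (y * z)) - r * (ad a (ad a y) * z)" for y z
    by (simp add: ad_mult ad_add algebra_simps)
  then have expand: "r * (ad a y * ad a z) + r * (ad a y * ad a z) + r * (y * ad a (ad a z)) = 0" for y z
    by (simp add: r_ad2 r_ad2_mult)
  have "r * (ad a y * ad a (ad a z)) = 0" for y z
    using expand[of "ad a y" z] by (simp add: r_ad2_mult)
  then have "r * (y * ad a (ad a (ad a z))) = 0" for y z
    using expand[of y "ad a z"] by simp
  then show "r * y * r = 0" for y
    by (simp add: r_def mult.assoc)
qed

lemma ad_ad_eq_0_if_jordan_obstructions: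
  fixes a :: "'a::ring"
  assumes "semiprime TYPE('a)" and "two_torsion_free TYPE('a)"
    and obstruction_aayx: "\<And>x y. jordan_obstruction_aayx a x y = 0"
    and obstruction_axax: "\<And>x. jordan_obstruction_axax a x = 0"
  shows "ad a (ad a y) = 0"
proof (rule semiprimeD[OF assms(1)])
  define s where "s = ad a (ad a y)"
  have third: "ad a (ad a (ad a x)) = 0" for x
    using ad_ad_ad_eq_0_if_jordan_obstruction_aayx[OF assms(1) obstruction_aayx] .
  have "ad a (ad a u) * ad a (ad a x) + ad a u * ad a (ad a (ad a x))
      = u * jordan_obstruction_aayx a x a + jordan_obstruction_aayx a x u * a - jordan_obstruction_aayx a x (u * a)" for u x
    by (simp add: jordan_obstruction_aayx_def ad_def algebra_simps)
  then have ss: "s * s = 0"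
    by (simp add: obstruction_aayx third s_def)
  have antisym: "ad (ad a x) (ad a (ad a z)) + ad (ad a (ad a x)) (ad a z) = 0" for x z
    using obstruction_aayx[of x z] by (simp add: jordan_obstruction_aayx_def third ad_def[of 0])
  have diag: "ad (ad a x) (ad a (ad a x)) = 0" for x
    using obstruction_axax[of x] by (simp add: jordan_obstruction_axax_def third ad_def[of x])
  have "ad (ad a x) (ad a (ad a z)) + ad (ad a x) (ad a (ad a z))
      = (ad (ad a x) (ad a (ad a z)) + ad (ad a (ad a x)) (ad a z))
      + (ad (ad a (x + z)) (ad a (ad a (x + z))) - ad (ad a x) (ad a (ad a x)) - ad (ad a z) (ad a (ad a z)))" for x z
    by (simp add: ad_add ad_def algebra_simps)
  then have "ad (ad a x) (ad a (ad a z)) + ad (ad a x) (ad a (ad a z)) = 0" for x z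
    by (simp only: antisym diag) simp
  then have commute: "ad (ad a x) (ad a (ad a z)) = 0" for x z
    by (rule two_torsion_freeD[OF assms(2)])
  have "ad a x * ad z s + ad x s * ad a z = ad (ad a (x * z)) s - ad (ad a x) s * z - x * ad (ad a z) s" for x z
    by (simp add: ad_mult ad_def algebra_simps)
  then have leibniz: "ad a x * ad z s + ad x s * ad a z = 0" for x z
    by (simp add: commute s_def)
  have annihilate: "ad x s * ad a (ad a z) = 0" for x z
    using leibniz[of x "ad a z"] by (simp add: commute s_def)
  have "s * x * s = x * (s * s) - ad x s * s" for x
    by (simp add: ad_def algebra_simps)
  then show "s * x * s = 0" for x
    using annihilate[of x y, folded s_def] by (simp add: ss)
qed

locale semiprime_twisted_jordan_derivation = twisted_jordan_derivation F a
  for F :: "'a::ring \<Rightarrow> 'a" and a :: 'a +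
  assumes semiprime: "semiprime TYPE('a)"
    and two_torsion_free: "two_torsion_free TYPE('a)"
begin

theorem central: "a * x = x * a"
proof -
  have aayx: "jordan_obstruction_aayx a x y = 0" for x y
    using double_jordan_obstruction_aayx_eq_0 by (rule two_torsion_freeD[OF two_torsion_free])
  have "jordan_obstruction_axax a x + jordan_obstruction_axax a x = 0" for x
    using quadruple_jordan_obstruction_axax_eq_0 by (rule two_torsion_freeD[OF two_torsion_free])
  then have axax: "jordan_obstruction_axax a x = 0" for x
    by (rule two_torsion_freeD[OF two_torsion_free])
  have "ad a (ad a y) = 0" for y
    using ad_ad_eq_0_if_jordan_obstructions[OF semiprime two_torsion_free aayx axax] .
  then have "ad a x = 0"
    by (rule ad_eq_0_if_ad_ad_eq_0[OF semiprime two_torsion_free])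
  then show ?thesis
    by (simp add: ad_def)
qed

end

lemma jordan_derivation_if_double_twisted:
  fixes f :: "'a::ring \<Rightarrow> 'a"
  assumes "twisted_jordan_derivation (\<lambda>x. f x + f x) a"
    and "two_torsion_free TYPE('a)"
    and central: "\<And>x. a * x = x * a"
  shows "jordan_derivation (\<lambda>x. f x - a * x)"
proof -
  interpret twisted_jordan_derivation "\<lambda>x. f x + f x" a by fact
  have f_add: "f (x + y) = f x + f y" for x y
    by (rule two_torsion_free_double_cancel[OF assms(2)]) (use additive[of x y] in \<open>simp add: algebra_simps\<close>)
  show ?thesis
  proof
    show "f (x + y) - a * (x + y) = (f x - a * x) + (f y - a * y)" for x y
      by (simp add: f_add algebra_simps)
    fix x y
    have swap: "u * (a * v) = a * (u * v)" "u * (v * a) = a * (u * v)" for u v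
      using central by (metis mult.assoc)+
    show "f (jcirc x y) - a * jcirc x y = jcirc (f x - a * x) y + jcirc x (f y - a * y)"
    proof (rule two_torsion_free_double_cancel[OF assms(2)])
      show "(f (jcirc x y) - a * jcirc x y) + (f (jcirc x y) - a * jcirc x y)
          = jcirc (f x - a * x) y + jcirc x (f y - a * y) + (jcirc (f x - a * x) y + jcirc x (f y - a * y))"
        using jcirc[of x y] by (simp add: jcirc_def swap algebra_simps)
    qed
  qed
qed

section \<open>Generalized Jordan derivations\<close>

locale unital_generalized_jordan_derivation =
  fixes f g h :: "'a::ring \<Rightarrow> 'a" and e :: 'a
  assumes f_add: "f (x + y) = f x + f y"
    and h_add: "h (x + y) = h x + h y"
    and unit_left: "e * x = x" and unit_right: "x * e = x"
    and generalized_jordan: "jcirc (f x) y + jcirc x (g y) = h (jcirc x y)"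
begin

lemma jcirc_unit_right: "jcirc x e = x + x"
  by (simp add: jcirc_def unit_left unit_right)

lemma jcirc_unit_left: "jcirc e x = x + x"
  by (simp add: jcirc_def unit_left unit_right)

lemma double_h: "h x + h x = f x + f x + jcirc x (g e)"
  using generalized_jordan[of x e] by (simp add: jcirc_unit_right h_add)

lemma double_g: "g y + g y = f y + f y + jcirc y (g e) - jcirc (f e) y"
  using generalized_jordan[of e y] double_h[of y] by (simp add: jcirc_unit_left h_add algebra_simps)

lemma double_generalized_jordan:
  "h (jcirc x y) + h (jcirc x y) = jcirc (f x) y + jcirc (f x) y + jcirc x (f y + f y + jcirc y (g e) - jcirc (f e) y)"
proof -
  have "h (jcirc x y) + h (jcirc x y) = (jcirc (f x) y + jcirc x (g y)) + (jcirc (f x) y + jcirc x (g y))"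
    by (simp only: generalized_jordan)
  also have "\<dots> = jcirc (f x) y + jcirc (f x) y + jcirc x (g y + g y)"
    by (simp add: jcirc_def algebra_simps)
  finally show ?thesis
    by (simp only: double_g)
qed

lemma unit_difference_commutes_with_commutators:
  "(f e - g e) * ad x y = ad x y * (f e - g e)"
proof -
  have "(f e - g e) * ad x y - ad x y * (f e - g e)
      = (h (jcirc x y) + h (jcirc x y)) - (h (jcirc y x) + h (jcirc y x))"
    by (simp only: double_generalized_jordan) (simp add: ad_def jcirc_def algebra_simps)
  also have "\<dots> = 0"
    by (simp add: jcirc_def add.commute)
  finally show ?thesis
    by simp
qed

lemma twisted_jordan_derivation_double:
  assumes central: "\<And>x. (f e - g e) * x = x * (f e - g e)"
  shows "twisted_jordan_derivation (\<lambda>x. f x + f x) (f e)"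
proof
  show "f (x + y) + f (x + y) = f x + f x + (f y + f y)" for x y
    by (simp add: f_add algebra_simps)
  define k where "k = f e - g e"
  have g_e: "g e = f e - k"
    by (simp add: k_def)
  have swap: "u * (k * v) = k * (u * v)" "u * (v * k) = k * (u * v)" for u v
    using central by (metis k_def mult.assoc)+
  have twisted: "jcirc (jcirc x y) (g e) = jcirc (jcirc x y) (f e) - jcirc x (jcirc (f e) y) + jcirc x (jcirc y (g e))"
    for x y
    unfolding g_e by (simp add: jcirc_def swap algebra_simps)
  fix x y
  have "f (jcirc x y) + f (jcirc x y) = (h (jcirc x y) + h (jcirc x y)) - jcirc (jcirc x y) (g e)"
    by (simp add: double_h)
  also have "\<dots> = jcirc (f x) y + jcirc (f x) y + jcirc x (f y + f y + jcirc y (g e) - jcirc (f e) y)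
      - jcirc (jcirc x y) (g e)"
    by (simp only: double_generalized_jordan)
  also have "\<dots> = jcirc (f x + f x) y + jcirc x (f y + f y) - jcirc (jcirc x y) (f e)"
    unfolding twisted by (simp add: jcirc_def algebra_simps)
  finally show "f (jcirc x y) + f (jcirc x y) = jcirc (f x + f x) y + jcirc x (f y + f y) - jcirc (jcirc x y) (f e)" .
qed

end

lemma is_algebra_scale_diff:
  fixes sc :: "'k::field \<Rightarrow> 'a::ring \<Rightarrow> 'a"
  assumes "is_algebra sc"
  shows "sc c (x - y) = sc c x - sc c y"
proof -
  have "sc c (x - y) + sc c y = sc c x"
    using assms unfolding is_algebra_def by (metis diff_add_cancel)
  then show ?thesis
    by (simp add: eq_diff_eq)
qed

lemma is_algebra_two_torsion_free:
  fixes sc :: "'k::field \<Rightarrow> 'a::ring \<Rightarrow> 'a"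
  assumes alg: "is_algebra sc" and two: "(2::'k) \<noteq> 0"
  shows "two_torsion_free TYPE('a)"
  unfolding two_torsion_free_def
proof (intro allI impI)
  fix x :: 'a
  assume "x + x = 0"
  then have "sc 2 x = 0"
    using alg unfolding is_algebra_def by (metis one_add_one)
  moreover have "x = sc (inverse 2) (sc 2 x)"
    using alg two unfolding is_algebra_def by (metis field_class.field_inverse)
  moreover have "sc c 0 = 0" for c
    using is_algebra_scale_diff[OF alg, of c 0 0] by simp
  ultimately show "x = 0"
    by simp
qed

lemma is_linear_add:
  assumes "is_algebra sc" and "is_linear sc f" and "is_linear sc g"
  shows "is_linear sc (\<lambda>x. f x + g x)"
  using assms unfolding is_linear_def is_algebra_def by (simp add: algebra_simps)

lemma is_linear_diff:
  assumes "is_algebra sc" and "is_linear sc f" and "is_linear sc g"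
  shows "is_linear sc (\<lambda>x. f x - g x)"
  using assms is_algebra_scale_diff[OF assms(1)] unfolding is_linear_def by (simp add: algebra_simps)

lemma left_mult_central_in_Cent:
  assumes "is_algebra sc" and central: "\<And>x. a * x = x * a"
  shows "(\<lambda>x. a * x) \<in> Cent sc"
  unfolding Cent_def is_linear_def
proof (intro CollectI conjI allI)
  show "a * (x + y) = a * x + a * y" for x y
    by (simp add: distrib_left)
  show "a * sc c x = sc c (a * x)" for c x
    using assms(1) unfolding is_algebra_def by metis
  show "a * (x * y) = a * x * y" for x y
    by (simp add: mult.assoc)
  show "a * (x * y) = x * (a * y)" for x y
    using central by (metis mult.assoc)
qed

lemma Cent_plus_Der_subset_GJDer:
  assumes "is_algebra sc"
  shows "map_setsum (Cent sc) (Der sc) \<subseteq> GJDer sc"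
proof
  fix f
  assume "f \<in> map_setsum (Cent sc) (Der sc)"
  then obtain c d where f: "f = (\<lambda>x. c x + d x)" and c: "c \<in> Cent sc" and d: "d \<in> Der sc"
    unfolding map_setsum_def by blast
  have "jcirc (f x) y + jcirc x (d y) = f (jcirc x y)" for x y
    using c d unfolding f Cent_def Der_def jcirc_def is_linear_def
    by (simp add: algebra_simps) (metis add.commute)
  moreover have "is_linear sc f"
    using c d is_linear_add[OF assms] unfolding f Cent_def Der_def by blast
  ultimately show "f \<in> GJDer sc"
    using d unfolding GJDer_def Der_def by blast
qed

lemma GJDer_subset_Cent_plus_Der:
  fixes sc :: "'k::field \<Rightarrow> 'a::ring \<Rightarrow> 'a"
  assumes alg: "is_algebra sc" and "unital TYPE('a)" and semiprime: "semiprime TYPE('a)"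
    and tf: "two_torsion_free TYPE('a)"
  shows "GJDer sc \<subseteq> map_setsum (Cent sc) (Der sc)"
proof
  fix f
  assume "f \<in> GJDer sc"
  then obtain g h where f_lin: "is_linear sc f" and h_lin: "is_linear sc h"
    and gjd: "\<And>x y. jcirc (f x) y + jcirc x (g y) = h (jcirc x y)"
    unfolding GJDer_def by blast
  from \<open>unital TYPE('a)\<close> obtain e :: 'a where unit: "\<And>x. e * x = x" "\<And>x. x * e = x"
    unfolding unital_def by blast
  interpret unital_generalized_jordan_derivation f g h e
    using f_lin h_lin unit gjd by unfold_locales (simp_all add: is_linear_def)
  have "(f e - g e) * x = x * (f e - g e)" for x
    using central_if_commutes_with_commutators[OF semiprime unit_difference_commutes_with_commutators] .
  then interpret twisted_jordan_derivation "\<lambda>x. f x + f x" "f e"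
    by (rule twisted_jordan_derivation_double)
  interpret semiprime_twisted_jordan_derivation "\<lambda>x. f x + f x" "f e"
    by unfold_locales (fact semiprime, fact tf)
  define D where "D x = f x - f e * x" for x
  interpret semiprime_jordan_derivation D
    unfolding D_def
    using jordan_derivation_if_double_twisted[OF twisted_jordan_derivation_axioms tf central]
    by (simp add: semiprime_jordan_derivation_def semiprime_jordan_derivation_axioms_def semiprime tf)
  have cent: "(\<lambda>x. f e * x) \<in> Cent sc"
    using left_mult_central_in_Cent[OF alg central] .
  then have "is_linear sc (\<lambda>x. f e * x)"
    unfolding Cent_def by blast
  then have "D \<in> Der sc"
    using is_linear_diff[OF alg f_lin] derivation unfolding Der_def D_def by simp
  moreover have "f = (\<lambda>x. f e * x + D x)"
    by (simp add: D_def)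
  ultimately show "f \<in> map_setsum (Cent sc) (Der sc)"
    using cent unfolding map_setsum_def by blast
qed

theorem theorem2p3:
  fixes sc :: "'k::field \<Rightarrow> 'a::ring \<Rightarrow> 'a"
  assumes "is_algebra sc"
    and "unital TYPE('a)"
    and "semiprime TYPE('a)"
    and "(2::'k) \<noteq> 0"
  shows "GJDer sc = map_setsum (Cent sc) (Der sc)"
  using GJDer_subset_Cent_plus_Der[OF assms(1-3) is_algebra_two_torsion_free[OF assms(1,4)]]
    Cent_plus_Der_subset_GJDer[OF assms(1)]
  by (rule antisym)

end
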